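(* Let $\psi\in\mathcal L$ be in XNF, let $C$ be a set of atoms with $\mathit{foa}(\psi)\subseteq C$, and let $\mathsf{decomp}(\psi,C)=\{(\mathsf{prm}_1,\mathsf{sub}_1),\dots,(\mathsf{prm}_k,\mathsf{sub}_k)\}$. If $A$ is a set of atoms such that $A\models\mathsf{prm}_i$ for some $1\le i\le k$, then $\psi^+(A)=\mathsf{rmX}(\mathsf{sub}_i)$.
   Context: Syntax. Atoms are predicate applications $p(t_1,\dots,t_k)$ over terms that may contain data variables and lookback variables. First-order formulas are $\phi::=\top\mid\bot\mid a\mid\neg a\mid\phi\wedge\phi\mid\phi\vee\phi$. Properties are $\psi::=\phi\mid\psi\wedge\psi\mid\psi\vee\psi\mid\mathsf X\psi\mid\mathsf X_{\mathsf w}\psi\mid\psi\mathsf U\psi\mid\psi\mathsf R\psi$, forming $\mathcal L$; $\mathit{foa}(\psi)$ is the set of atoms of $\psi$. $\mathit{last}$ is a dedicated proposition. Normal forms. - $\mathsf{tnps}(\psi)=\{\psi\}$ if $\psi$ is a (negated) atom or rooted by a temporal operator, and $\mathsf{tnps}(\psi_1\wedge\psi_2)=\mathsf{tnps}(\psi_1\vee\psi_2)=\mathsf{tnps}(\psi_1)\cup\mathsf{tnps}(\psi_2)$. - $\psi$ is in XNF if $\mathsf{tnps}(\psi)$ contains only (negated) atoms and properties rooted by $\mathsf X$ or $\mathsf X_{\mathsf w}$. - $\mathsf{rmX}$: $\mathsf{rmX}(\bot)=\bot$, $\mathsf{rmX}(\top)=\top$, $\mathsf{rmX}(\mathit{last})=\bot$,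 $\mathsf{rmX}(\neg\mathit{last})=\top$, $\mathsf{rmX}(\mathsf X\psi)=\psi\wedge\neg\mathit{last}$, $\mathsf{rmX}(\mathsf X_{\mathsf w}\psi)=\psi\vee\mathit{last}$, and $\mathsf{rmX}$ commutes with $\wedge$ and $\vee$. Progression. For a set of atoms $A$: - an atom $a$ maps to $\top$ if $a\in A$, else $\bot$; $\neg a$ maps to $\bot$ if $a\in A$, else $\top$; - $^+$ commutes with $\wedge$ and $\vee$; - $(\mathsf X\psi_1)^+(A)=\psi_1\wedge\neg\mathit{last}$, and $(\mathsf X_{\mathsf w}\psi_1)^+(A)=\psi_1\vee\mathit{last}$; - $(\psi_1\mathsf U\psi_2)^+(A)=\psi_2^+(A)\vee(\psi_1^+(A)\wedge(\mathsf X(\psi_1\mathsf U\psi_2))^+(A))$; - $(\psi_1\mathsf R\psi_2)^+(A)=\psi_2^+(A)\wedge(\psi_1^+(A)\vee(\mathsf X_{\mathsf w}(\psi_1\mathsf R\psi_2))^+(A))$. Decomposition. $\equiv$ is propositional equivalence, treating atoms, $\mathit{last}$ and subproperties rooted by temporal operators as opaque propositions. For a property $\psi$ in XNF and a set of atoms $C$, $\mathsf{decomp}(\psi,C)=\{(\mathsf{prm}_1,\mathsf{sub}_1),\dots,(\mathsf{prm}_k,\mathsf{sub}_k)\}$, $k\ge1$, is a set of pairs of properties with: 1. $\psi\equiv\bigvee_i(\mathsf{prm}_i\wedge\mathsf{sub}_i)$; 2. each $\mathsf{prm}_i$ has no temporal operators and only atoms from $C$, and $\mathsf{tnps}(\mathsf{sub}_i)\cap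 C=\emptyset$; 3. $\mathsf{prm}_i\wedge\mathsf{prm}_j\equiv\bot$ for $i\ne j$; 4. $\bigvee_i\mathsf{prm}_i\equiv\top$; 5. $\mathsf{sub}_i\neq\mathsf{sub}_j$ for $i\ne j$. $A\models\mathsf{prm}_i$ means propositional satisfaction with the atoms in $A$ true and all others false. *)

theory Defs
  imports Main
begin

text \<open>Properties over an abstract type 'a of (first-order) atoms. The dedicated
  proposition last and its negation are separate constructors; negation is only
  applied to atoms and to last.\<close>

datatype 'a ltlp =
    TT | FF
  | Atom 'a | NAtom 'a
  | Last | NLast
  | And "'a ltlp" "'a ltlp" | Or "'a ltlp" "'a ltlp"
  | Next "'a ltlp" | WNext "'a ltlp"
  | Until "'a ltlp" "'a ltlp" | Release "'a ltlp" "'a ltlp"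

fun in_L :: "'a ltlp \<Rightarrow> bool" where
  "in_L Last = False"
| "in_L NLast = False"
| "in_L (And p q) = (in_L p \<and> in_L q)"
| "in_L (Or p q) = (in_L p \<and> in_L q)"
| "in_L (Next p) = in_L p"
| "in_L (WNext p) = in_L p"
| "in_L (Until p q) = (in_L p \<and> in_L q)"
| "in_L (Release p q) = (in_L p \<and> in_L q)"
| "in_L _ = True"

fun foa :: "'a ltlp \<Rightarrow> 'a set" where
  "foa (Atom a) = {a}"
| "foa (NAtom a) = {a}"
| "foa (And p q) = foa p \<union> foa q"
| "foa (Or p q) = foa p \<union> foa q"
| "foa (Next p) = foa p"
| "foa (WNext p) = foa p"
| "foa (Until p q) = foa p \<union> foa q"
| "foa (Release p q) = foa p \<union> foa q"
| "foa _ = {}"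

fun tnps :: "'a ltlp \<Rightarrow> 'a ltlp set" where
  "tnps TT = {}"
| "tnps FF = {}"
| "tnps (And p q) = tnps p \<union> tnps q"
| "tnps (Or p q) = tnps p \<union> tnps q"
| "tnps p = {p}"

fun is_lit_or_next :: "'a ltlp \<Rightarrow> bool" where
  "is_lit_or_next (Atom _) = True"
| "is_lit_or_next (NAtom _) = True"
| "is_lit_or_next (Next _) = True"
| "is_lit_or_next (WNext _) = True"
| "is_lit_or_next _ = False"

definition XNF :: "'a ltlp \<Rightarrow> bool" where
  "XNF p \<longleftrightarrow> (\<forall>t\<in>tnps p. is_lit_or_next t)"

text \<open>rmX (identity on atoms / until / release, which the paper leaves unspecified).\<close>
fun rmX :: "'a ltlp \<Rightarrow> 'a ltlp" where
  "rmX TT = TT"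
| "rmX FF = FF"
| "rmX Last = FF"
| "rmX NLast = TT"
| "rmX (Next p) = And p NLast"
| "rmX (WNext p) = Or p Last"
| "rmX (And p q) = And (rmX p) (rmX q)"
| "rmX (Or p q) = Or (rmX p) (rmX q)"
| "rmX p = p"

text \<open>Progression. The cases for last are not used on properties of L.\<close>
fun prog :: "'a ltlp \<Rightarrow> 'a set \<Rightarrow> 'a ltlp" where
  "prog TT A = TT"
| "prog FF A = FF"
| "prog (Atom a) A = (if a \<in> A then TT else FF)"
| "prog (NAtom a) A = (if a \<in> A then FF else TT)"
| "prog Last A = Last"
| "prog NLast A = NLast"
| "prog (And p q) A = And (prog p A) (prog q A)"
| "prog (Or p q) A = Or (prog p A) (prog q A)"
| "prog (Next p) A = And p NLast"
| "prog (WNext p) A = Or p Last"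
| "prog (Until p q) A = Or (prog q A) (And (prog p A) (And (Until p q) NLast))"
| "prog (Release p q) A = And (prog q A) (Or (prog p A) (Or (Release p q) Last))"

text \<open>Propositional evaluation: atoms, last and temporally rooted subproperties are
  opaque propositions, valued by v (a negated atom / negated last is the negation
  of the value of the atom / last).\<close>
fun peval :: "('a ltlp \<Rightarrow> bool) \<Rightarrow> 'a ltlp \<Rightarrow> bool" where
  "peval v TT = True"
| "peval v FF = False"
| "peval v (Atom a) = v (Atom a)"
| "peval v (NAtom a) = (\<not> v (Atom a))"
| "peval v Last = v Last"
| "peval v NLast = (\<not> v Last)"
| "peval v (And p q) = (peval v p \<and> peval v q)"
| "peval v (Or p q) = (peval v p \<or> peval v q)"
| "peval v p = v p"

definition pequiv :: "'a ltlp \<Rightarrow> 'a ltlp \<Rightarrow> bool" (infix "\<equiv>\<^sub>p" 50) where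
  "p \<equiv>\<^sub>p q \<longleftrightarrow> (\<forall>v. peval v p = peval v q)"

fun bigOr :: "'a ltlp list \<Rightarrow> 'a ltlp" where
  "bigOr [] = FF"
| "bigOr (p # ps) = Or p (bigOr ps)"

text \<open>A |= prm: atoms of A true, all others false.\<close>
definition models :: "'a set \<Rightarrow> 'a ltlp \<Rightarrow> bool" where
  "models A p \<longleftrightarrow> peval (\<lambda>x. case x of Atom a \<Rightarrow> a \<in> A | _ \<Rightarrow> False) p"

fun fo_over :: "'a set \<Rightarrow> 'a ltlp \<Rightarrow> bool" where
  "fo_over C TT = True"
| "fo_over C FF = True"
| "fo_over C (Atom a) = (a \<in> C)"
| "fo_over C (NAtom a) = (a \<in> C)"
| "fo_over C (And p q) = (fo_over C p \<and> fo_over C q)"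
| "fo_over C (Or p q) = (fo_over C p \<and> fo_over C q)"
| "fo_over C _ = False"

definition is_decomp :: "'a ltlp \<Rightarrow> 'a set \<Rightarrow> ('a ltlp \<times> 'a ltlp) list \<Rightarrow> bool" where
  "is_decomp psi C ds \<longleftrightarrow>
     length ds \<ge> 1
   \<and> psi \<equiv>\<^sub>p bigOr (map (\<lambda>(p, s). And p s) ds)
   \<and> (\<forall>i<length ds. fo_over C (fst (ds ! i))
        \<and> (\<forall>a\<in>C. Atom a \<notin> tnps (snd (ds ! i)) \<and> NAtom a \<notin> tnps (snd (ds ! i))))
   \<and> (\<forall>i<length ds. \<forall>j<length ds. i \<noteq> j \<longrightarrow> And (fst (ds ! i)) (fst (ds ! j)) \<equiv>\<^sub>p FF)
   \<and> bigOr (map fst ds) \<equiv>\<^sub>p TT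
   \<and> (\<forall>i<length ds. \<forall>j<length ds. i \<noteq> j \<longrightarrow> snd (ds ! i) \<noteq> snd (ds ! j))"

end

theory Submission
  imports Defs
begin

text \<open>Fix a valuation v of the opaque propositions. Under the valuation that reads the atoms
  of C off A and gives every other opaque proposition the value of its rmX under v, the
  formula psi means what prog psi A means under v, and sub_i means what rmX sub_i means
  under v. This valuation satisfies prm_i, so by the disjointness of the premises the
  decomposition collapses to psi \<equiv> sub_i.\<close>

lemma peval_bigOr_conj_pairs:
  "peval v (bigOr (map (\<lambda>(p, s). And p s) ds))
     \<longleftrightarrow> (\<exists>j<length ds. peval v (fst (ds ! j)) \<and> peval v (snd (ds ! j)))"
  by (induction ds) (auto simp: less_Suc_eq_0_disj)

lemma peval_fo_over_cong:
  assumes "fo_over C p" and "\<And>a. a \<in> C \<Longrightarrow> v (Atom a) = w (Atom a)"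
  shows "peval v p = peval w p"
  using assms by (induction p) auto

lemma is_decomp_peval_sub:
  assumes "is_decomp psi C ds" and "i < length ds" and "peval v (fst (ds ! i))"
  shows "peval v psi = peval v (snd (ds ! i))"
proof -
  have disjoint: "\<not> peval v (fst (ds ! j))" if "j < length ds" "j \<noteq> i" for j
    using assms that unfolding is_decomp_def pequiv_def by (metis peval.simps(2,7))
  have "peval v psi \<longleftrightarrow> (\<exists>j<length ds. peval v (fst (ds ! j)) \<and> peval v (snd (ds ! j)))"
    using assms(1) unfolding is_decomp_def pequiv_def by (simp add: peval_bigOr_conj_pairs)
  then show ?thesis
    using assms(2,3) disjoint by blast
qed

definition progressed_valuation ::
    "('a ltlp \<Rightarrow> bool) \<Rightarrow> 'a set \<Rightarrow> 'a set \<Rightarrow> 'a ltlp \<Rightarrow> bool" where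
  "progressed_valuation v C A x =
     (case x of Atom a \<Rightarrow> (if a \<in> C then a \<in> A else v (Atom a)) | _ \<Rightarrow> peval v (rmX x))"

lemma progressed_valuation_Atom [simp]:
  "progressed_valuation v C A (Atom a) = (if a \<in> C then a \<in> A else v (Atom a))"
  by (simp add: progressed_valuation_def)

lemma progressed_valuation_non_Atom:
  "(\<And>a. x \<noteq> Atom a) \<Longrightarrow> progressed_valuation v C A x = peval v (rmX x)"
  by (cases x) (auto simp: progressed_valuation_def)

lemma peval_rmX_eq_progressed_valuation:
  assumes "\<forall>a\<in>C. Atom a \<notin> tnps s \<and> NAtom a \<notin> tnps s"
  shows "peval v (rmX s) = peval (progressed_valuation v C A) s"
  using assms by (induction s) (simp_all add: progressed_valuation_non_Atom, blast+)

lemma peval_prog_eq_progressed_valuation: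
  assumes "XNF p" and "foa p \<subseteq> C"
  shows "peval v (prog p A) = peval (progressed_valuation v C A) p"
  using assms unfolding XNF_def
  by (induction p) (simp_all add: progressed_valuation_non_Atom)

lemma models_fo_over_progressed_valuation:
  assumes "fo_over C p" and "models A p"
  shows "peval (progressed_valuation v C A) p"
  using assms unfolding models_def
  by (subst peval_fo_over_cong[where w = "\<lambda>x. case x of Atom a \<Rightarrow> a \<in> A | _ \<Rightarrow> False"]) auto

theorem lemma6:
  fixes psi :: "'a ltlp" and C A :: "'a set" and ds :: "('a ltlp \<times> 'a ltlp) list" and i :: nat
  assumes "in_L psi" and "XNF psi" and "foa psi \<subseteq> C"
    and "is_decomp psi C ds"
    and "i < length ds" and "models A (fst (ds ! i))"
  shows "prog psi A \<equiv>\<^sub>p rmX (snd (ds ! i))"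
  unfolding pequiv_def
proof
  fix v
  let ?w = "progressed_valuation v C A"
  have prm: "fo_over C (fst (ds ! i))"
    and sub: "\<forall>a\<in>C. Atom a \<notin> tnps (snd (ds ! i)) \<and> NAtom a \<notin> tnps (snd (ds ! i))"
    using assms(4,5) unfolding is_decomp_def by auto
  have "peval v (prog psi A) = peval ?w psi"
    using assms(2,3) by (rule peval_prog_eq_progressed_valuation)
  also have "\<dots> = peval ?w (snd (ds ! i))"
    using assms(4,5) models_fo_over_progressed_valuation[OF prm assms(6)]
    by (rule is_decomp_peval_sub)
  also have "\<dots> = peval v (rmX (snd (ds ! i)))"
    using sub by (rule peval_rmX_eq_progressed_valuation[symmetric])
  finally show "peval v (prog psi A) = peval v (rmX (snd (ds ! i)))" .
qed

end
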